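(* Let $\operatorname{R}_4=\{a_0,a_1,a_2,a_3\}$ be the dihedral quandle of order $4$, with $a_ia_j=a_{2j-i \pmod 4}$. Then $\operatorname{Aut}(\mathbb{Z}[\operatorname{R}_4])\cong(\mathbb{Z}_2\times\mathbb{Z}_2)\rtimes\mathbb{Z}_2$.
   Context: For a quandle $Q$, the quandle ring $\mathbb{Z}[Q]$ is the free abelian group with basis $Q$, with multiplication $\big(\sum_i\alpha_i q_i\big)\big(\sum_j\beta_j q_j\big)=\sum_{i,j}\alpha_i\beta_j (q_iq_j)$. $\operatorname{Aut}(\mathbb{Z}[Q])$ denotes the group of ring automorphisms of $\mathbb{Z}[Q]$ (bijective additive maps preserving the multiplication). *)

theory Defs
  imports "HOL-Algebra.Algebra"
begin

text \<open>The quandle ring Z[Q] is the free abelian group with basis Q, modelled as the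
  integer-valued functions on the type of Q that vanish outside Q (Q finite, so
  these are exactly the finitely supported ones); the basis element q is the
  indicator of q.\<close>

definition qring_elems :: "'a set \<Rightarrow> ('a \<Rightarrow> int) set" where
  "qring_elems Q = {f. \<forall>x. x \<notin> Q \<longrightarrow> f x = 0}"

definition qring_add :: "('a \<Rightarrow> int) \<Rightarrow> ('a \<Rightarrow> int) \<Rightarrow> ('a \<Rightarrow> int)" where
  "qring_add f g = (\<lambda>z. f z + g z)"

definition qring_mult ::
  "'a set \<Rightarrow> ('a \<Rightarrow> 'a \<Rightarrow> 'a) \<Rightarrow> ('a \<Rightarrow> int) \<Rightarrow> ('a \<Rightarrow> int) \<Rightarrow> ('a \<Rightarrow> int)" where
  "qring_mult Q qop f g =
     (\<lambda>z. \<Sum>x\<in>Q. \<Sum>y\<in>Q. if qop x y = z then f x * g y else 0)"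

text \<open>Ring automorphisms of Z[Q]: bijective additive maps preserving the product
  (made extensional so that equal automorphisms are equal HOL functions).\<close>

definition qring_auts ::
  "'a set \<Rightarrow> ('a \<Rightarrow> 'a \<Rightarrow> 'a) \<Rightarrow> (('a \<Rightarrow> int) \<Rightarrow> ('a \<Rightarrow> int)) set" where
  "qring_auts Q qop =
     {\<phi>. \<phi> \<in> extensional (qring_elems Q)
        \<and> bij_betw \<phi> (qring_elems Q) (qring_elems Q)
        \<and> (\<forall>f\<in>qring_elems Q. \<forall>g\<in>qring_elems Q.
              \<phi> (qring_add f g) = qring_add (\<phi> f) (\<phi> g))
        \<and> (\<forall>f\<in>qring_elems Q. \<forall>g\<in>qring_elems Q.
              \<phi> (qring_mult Q qop f g) = qring_mult Q qop (\<phi> f) (\<phi> g))}"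

definition qring_Aut ::
  "'a set \<Rightarrow> ('a \<Rightarrow> 'a \<Rightarrow> 'a) \<Rightarrow> (('a \<Rightarrow> int) \<Rightarrow> ('a \<Rightarrow> int)) monoid" where
  "qring_Aut Q qop =
     \<lparr>carrier = qring_auts Q qop,
      monoid.mult = (\<lambda>\<phi> \<psi>. compose (qring_elems Q) \<phi> \<psi>),
      one = restrict id (qring_elems Q)\<rparr>"

definition R4 :: "int set" where
  "R4 = {0, 1, 2, 3}"

definition R4_op :: "int \<Rightarrow> int \<Rightarrow> int" where
  "R4_op i j = (2 * j - i) mod 4"

definition semidirect_prod ::
  "('n, 'c) monoid_scheme \<Rightarrow> ('h, 'd) monoid_scheme \<Rightarrow> ('h \<Rightarrow> 'n \<Rightarrow> 'n)
     \<Rightarrow> ('n \<times> 'h) monoid" where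
  "semidirect_prod N H act =
     \<lparr>carrier = carrier N \<times> carrier H,
      monoid.mult = (\<lambda>(n, h) (n', h'). (n \<otimes>\<^bsub>N\<^esub> act h n', h \<otimes>\<^bsub>H\<^esub> h')),
      one = (\<one>\<^bsub>N\<^esub>, \<one>\<^bsub>H\<^esub>)\<rparr>"

text \<open>Z_2 and the (unique up to isomorphism) nontrivial action of Z_2 on Z_2 \<times> Z_2,
  swapping the two factors.\<close>

abbreviation Z2 :: "int monoid" where
  "Z2 \<equiv> integer_mod_group 2"

definition swap_act :: "int \<Rightarrow> int \<times> int \<Rightarrow> int \<times> int" where
  "swap_act h p = (if h = 0 then p else (snd p, fst p))"

definition Z2xZ2_rtimes_Z2 :: "((int \<times> int) \<times> int) monoid" where
  "Z2xZ2_rtimes_Z2 = semidirect_prod (Z2 \<times>\<times> Z2) Z2 swap_act"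

end

theory Submission
  imports Defs
begin

text \<open>A ring automorphism \<phi> of Z[R_4] sends each basis element e_i, an idempotent, to a nonzero
  idempotent. Over Z these all have the form t e_j + (1 - t) e_(j+2) with j \<in> {0, 1}. Since
  e_0 e_1 = e_2 and e_1 e_0 = e_3, the images of e_0 and e_1 lie in different parity classes and
  determine those of e_2 and e_3; writing e_j as an integer combination of the images, which is
  possible by surjectivity, leaves only t \<in> {0, 1}. Hence \<phi> permutes the basis, by a quandle
  automorphism of R_4. The quandle automorphisms of R_4 = Z/4 are the eight affine maps
  z \<mapsto> \<plusminus>z + t, a dihedral group of order 8, and each of them induces a ring
  automorphism of Z[R_4] by pulling back.\<close>

definition qring_basis :: "'a \<Rightarrow> 'a \<Rightarrow> int" where
  "qring_basis q = (\<lambda>z. if z = q then 1 else 0)"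

lemma qring_basis_eq_iff [simp]: "qring_basis x = qring_basis y \<longleftrightarrow> x = y"
proof
  assume "qring_basis x = qring_basis y"
  then have "qring_basis x x = qring_basis y x"
    by simp
  then show "x = y"
    by (simp add: qring_basis_def split: if_splits)
qed simp

lemma qring_elems_eqI:
  assumes "f \<in> qring_elems Q" "g \<in> qring_elems Q" "\<And>z. z \<in> Q \<Longrightarrow> f z = g z"
  shows "f = g"
proof
  fix z
  show "f z = g z"
    using assms by (cases "z \<in> Q") (auto simp: qring_elems_def)
qed

lemma qring_basis_in_elems: "q \<in> Q \<Longrightarrow> qring_basis q \<in> qring_elems Q"
  by (simp add: qring_elems_def qring_basis_def)

lemma qring_add_in_elems:
  "f \<in> qring_elems Q \<Longrightarrow> g \<in> qring_elems Q \<Longrightarrow> qring_add f g \<in> qring_elems Q"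
  by (simp add: qring_elems_def qring_add_def)

lemma qring_elems_eq_sum:
  assumes "finite Q" "f \<in> qring_elems Q"
  shows "f = (\<lambda>z. \<Sum>q\<in>Q. f q * qring_basis q z)"
proof
  fix z
  have "(\<Sum>q\<in>Q. f q * qring_basis q z) = (\<Sum>q\<in>Q. if z = q then f q else 0)"
    by (intro sum.cong) (auto simp: qring_basis_def)
  then show "f z = (\<Sum>q\<in>Q. f q * qring_basis q z)"
    using assms by (auto simp: qring_elems_def)
qed

lemma qring_mult_in_elems:
  assumes "\<And>x y. x \<in> Q \<Longrightarrow> y \<in> Q \<Longrightarrow> qop x y \<in> Q"
  shows "qring_mult Q qop f g \<in> qring_elems Q"
  using assms by (auto simp: qring_mult_def qring_elems_def intro!: sum.neutral)

lemma qring_mult_basis: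
  assumes "finite Q" "x \<in> Q" "y \<in> Q"
  shows "qring_mult Q qop (qring_basis x) (qring_basis y) = qring_basis (qop x y)"
proof
  fix z
  have "qring_mult Q qop (qring_basis x) (qring_basis y) z =
      (\<Sum>x'\<in>Q. \<Sum>y'\<in>Q. if y' = y then if x' = x then qring_basis (qop x y) z else 0 else 0)"
    unfolding qring_mult_def by (intro sum.cong refl) (auto simp: qring_basis_def)
  then show "qring_mult Q qop (qring_basis x) (qring_basis y) z = qring_basis (qop x y) z"
    using assms by simp
qed

locale qring_additive =
  fixes Q :: "'a set" and \<phi> :: "('a \<Rightarrow> int) \<Rightarrow> ('a \<Rightarrow> int)"
  assumes additive: "f \<in> qring_elems Q \<Longrightarrow> g \<in> qring_elems Q \<Longrightarrow>
    \<phi> (qring_add f g) = qring_add (\<phi> f) (\<phi> g)"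
begin

lemma map_zero: "\<phi> (\<lambda>_. 0) = (\<lambda>_. 0)"
proof -
  have "\<phi> (\<lambda>_. 0) = qring_add (\<phi> (\<lambda>_. 0)) (\<phi> (\<lambda>_. 0))"
    using additive[of "\<lambda>_. 0" "\<lambda>_. 0"] by (simp add: qring_add_def qring_elems_def)
  then show ?thesis
    by (simp add: qring_add_def fun_eq_iff)
qed

lemma map_scale:
  assumes f: "f \<in> qring_elems Q"
  shows "\<phi> (\<lambda>z. c * f z) = (\<lambda>z. c * \<phi> f z)"
proof (induction c rule: int_induct[where k = 0])
  case base
  show ?case using map_zero by simp
next
  case (step1 c)
  have "(\<lambda>z. (c + 1) * f z) = qring_add (\<lambda>z. c * f z) f"
    by (simp add: qring_add_def algebra_simps)
  moreover have "(\<lambda>z. c * f z) \<in> qring_elems Q"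
    using f by (simp add: qring_elems_def)
  ultimately show ?case
    using step1 f additive by (simp add: qring_add_def algebra_simps)
next
  case (step2 c)
  have "(\<lambda>z. c * f z) = qring_add (\<lambda>z. (c - 1) * f z) f"
    by (simp add: qring_add_def algebra_simps)
  moreover have "(\<lambda>z. (c - 1) * f z) \<in> qring_elems Q"
    using f by (simp add: qring_elems_def)
  ultimately have "(\<lambda>z. c * \<phi> f z) = (\<lambda>z. \<phi> (\<lambda>z. (c - 1) * f z) z + \<phi> f z)"
    using step2 f additive by (simp add: qring_add_def)
  then show ?case
    by (simp add: fun_eq_iff left_diff_distrib)
qed

lemma map_sum_basis:
  assumes "finite S" "S \<subseteq> Q"
  shows "\<phi> (\<lambda>z. \<Sum>q\<in>S. c q * qring_basis q z) = (\<lambda>z. \<Sum>q\<in>S. c q * \<phi> (qring_basis q) z)"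
  using assms
proof (induction S rule: finite_induct)
  case empty
  show ?case using map_zero by simp
next
  case (insert q S)
  have "(\<lambda>z. \<Sum>p\<in>insert q S. c p * qring_basis p z) =
      qring_add (\<lambda>z. c q * qring_basis q z) (\<lambda>z. \<Sum>p\<in>S. c p * qring_basis p z)"
    using insert by (simp add: qring_add_def)
  moreover have "(\<lambda>z. c q * qring_basis q z) \<in> qring_elems Q"
    "(\<lambda>z. \<Sum>p\<in>S. c p * qring_basis p z) \<in> qring_elems Q"
    using insert by (auto simp: qring_elems_def qring_basis_def intro!: sum.neutral)
  ultimately show ?case
    using insert additive map_scale[OF qring_basis_in_elems] by (simp add: qring_add_def)
qed

lemma map_eq_sum:
  assumes "finite Q" "f \<in> qring_elems Q"
  shows "\<phi> f = (\<lambda>z. \<Sum>q\<in>Q. f q * \<phi> (qring_basis q) z)"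
proof -
  have "\<phi> f = \<phi> (\<lambda>z. \<Sum>q\<in>Q. f q * qring_basis q z)"
    by (rule arg_cong[OF qring_elems_eq_sum[OF assms]])
  also have "\<dots> = (\<lambda>z. \<Sum>q\<in>Q. f q * \<phi> (qring_basis q) z)"
    by (rule map_sum_basis[OF assms(1) order.refl])
  finally show ?thesis .
qed

end

lemma
  assumes "\<phi> \<in> qring_auts Q qop"
  shows qring_aut_extensional: "\<phi> \<in> extensional (qring_elems Q)"
    and qring_aut_bij: "bij_betw \<phi> (qring_elems Q) (qring_elems Q)"
    and qring_aut_additive: "qring_additive Q \<phi>"
    and qring_aut_mult: "f \<in> qring_elems Q \<Longrightarrow> g \<in> qring_elems Q \<Longrightarrow>
      \<phi> (qring_mult Q qop f g) = qring_mult Q qop (\<phi> f) (\<phi> g)"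
  using assms unfolding qring_auts_def qring_additive_def by simp_all

lemma qring_aut_in_elems:
  "\<phi> \<in> qring_auts Q qop \<Longrightarrow> f \<in> qring_elems Q \<Longrightarrow> \<phi> f \<in> qring_elems Q"
  by (rule bij_betw_apply[OF qring_aut_bij])

lemma qring_aut_surj:
  assumes "\<phi> \<in> qring_auts Q qop" "g \<in> qring_elems Q"
  shows "\<exists>f\<in>qring_elems Q. \<phi> f = g"
proof -
  have "g \<in> \<phi> ` qring_elems Q"
    using bij_betw_imp_surj_on[OF qring_aut_bij[OF assms(1)]] assms(2) by simp
  then show ?thesis
    by blast
qed

lemma qring_aut_basis_eq_iff:
  assumes "\<phi> \<in> qring_auts Q qop" "x \<in> Q" "y \<in> Q"
  shows "\<phi> (qring_basis x) = \<phi> (qring_basis y) \<longleftrightarrow> x = y"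
  using inj_onD[OF bij_betw_imp_inj_on[OF qring_aut_bij[OF assms(1)]] _
      qring_basis_in_elems[OF assms(2)] qring_basis_in_elems[OF assms(3)]]
  by auto

lemma qring_auts_eqI:
  assumes "finite Q" "\<phi> \<in> qring_auts Q qop" "\<psi> \<in> qring_auts Q qop"
    and "\<And>q. q \<in> Q \<Longrightarrow> \<phi> (qring_basis q) = \<psi> (qring_basis q)"
  shows "\<phi> = \<psi>"
proof
  fix f
  show "\<phi> f = \<psi> f"
  proof (cases "f \<in> qring_elems Q")
    case True
    have "\<phi> f = (\<lambda>z. \<Sum>q\<in>Q. f q * \<phi> (qring_basis q) z)"
      "\<psi> f = (\<lambda>z. \<Sum>q\<in>Q. f q * \<psi> (qring_basis q) z)"
      using qring_additive.map_eq_sum[OF qring_aut_additive assms(1) True] assms(2,3) by blast+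
    then show ?thesis
      using assms(4) by simp
  next
    case False
    then show ?thesis
      using extensional_arb[OF qring_aut_extensional[OF assms(2)] False]
        extensional_arb[OF qring_aut_extensional[OF assms(3)] False] by simp
  qed
qed

lemma qring_aut_mult_basis:
  assumes "finite Q" "\<phi> \<in> qring_auts Q qop" "x \<in> Q" "y \<in> Q"
  shows "\<phi> (qring_basis (qop x y)) = qring_mult Q qop (\<phi> (qring_basis x)) (\<phi> (qring_basis y))"
  using qring_aut_mult[OF assms(2) qring_basis_in_elems[OF assms(3)] qring_basis_in_elems[OF assms(4)]]
    qring_mult_basis[OF assms(1,3,4)] by simp

lemma qring_aut_basis_nonzero:
  assumes "\<phi> \<in> qring_auts Q qop" "q \<in> Q"
  shows "\<phi> (qring_basis q) \<noteq> (\<lambda>_. 0)"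
proof
  assume "\<phi> (qring_basis q) = (\<lambda>_. 0)"
  then have "\<phi> (qring_basis q) = \<phi> (\<lambda>_. 0)"
    using qring_additive.map_zero[OF qring_aut_additive[OF assms(1)]] by simp
  moreover have "(\<lambda>_. 0) \<in> qring_elems Q"
    by (simp add: qring_elems_def)
  ultimately have "qring_basis q = (\<lambda>_. 0)"
    by (rule inj_onD[OF bij_betw_imp_inj_on[OF qring_aut_bij[OF assms(1)]] _
          qring_basis_in_elems[OF assms(2)]])
  then have "qring_basis q q = 0"
    by simp
  then show False
    by (simp add: qring_basis_def)
qed

lemma qring_aut_basis_perm:
  assumes "finite Q" "\<And>x y. x \<in> Q \<Longrightarrow> y \<in> Q \<Longrightarrow> qop x y \<in> Q" "\<phi> \<in> qring_auts Q qop"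
    and \<pi>: "\<And>q. q \<in> Q \<Longrightarrow> \<pi> q \<in> Q \<and> \<phi> (qring_basis q) = qring_basis (\<pi> q)"
  shows "inj_on \<pi> Q" and "\<And>x y. x \<in> Q \<Longrightarrow> y \<in> Q \<Longrightarrow> \<pi> (qop x y) = qop (\<pi> x) (\<pi> y)"
proof -
  show "inj_on \<pi> Q"
  proof (rule inj_onI)
    fix x y assume "x \<in> Q" "y \<in> Q" "\<pi> x = \<pi> y"
    then have "\<phi> (qring_basis x) = \<phi> (qring_basis y)"
      using \<pi> by simp
    then show "x = y"
      using qring_aut_basis_eq_iff[OF assms(3)] \<open>x \<in> Q\<close> \<open>y \<in> Q\<close> by blast
  qed
  fix x y assume x: "x \<in> Q" and y: "y \<in> Q"
  have "qring_basis (\<pi> (qop x y)) = \<phi> (qring_basis (qop x y))"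
    using \<pi> assms(2) x y by simp
  also have "\<dots> = qring_mult Q qop (qring_basis (\<pi> x)) (qring_basis (\<pi> y))"
    using qring_aut_mult_basis[OF assms(1,3) x y] \<pi> x y by simp
  also have "\<dots> = qring_basis (qop (\<pi> x) (\<pi> y))"
    using \<pi> x y by (simp add: qring_mult_basis assms(1))
  finally show "\<pi> (qop x y) = qop (\<pi> x) (\<pi> y)"
    by simp
qed

section \<open>Automorphisms induced by quandle automorphisms\<close>

definition qring_pullback :: "'a set \<Rightarrow> ('a \<Rightarrow> 'a) \<Rightarrow> ('a \<Rightarrow> int) \<Rightarrow> ('a \<Rightarrow> int)" where
  "qring_pullback Q \<sigma> = restrict (\<lambda>f z. if z \<in> Q then f (\<sigma> z) else 0) (qring_elems Q)"

lemma qring_pullback_apply: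
  "f \<in> qring_elems Q \<Longrightarrow> qring_pullback Q \<sigma> f = (\<lambda>z. if z \<in> Q then f (\<sigma> z) else 0)"
  by (simp add: qring_pullback_def)

lemma qring_pullback_in_elems:
  "f \<in> qring_elems Q \<Longrightarrow> qring_pullback Q \<sigma> f \<in> qring_elems Q"
  by (simp add: qring_pullback_apply qring_elems_def)

lemma qring_pullback_basis:
  "q \<in> Q \<Longrightarrow> qring_pullback Q \<sigma> (qring_basis q) = (\<lambda>z. if z \<in> Q \<and> \<sigma> z = q then 1 else 0)"
  by (simp add: qring_pullback_apply qring_basis_in_elems) (auto simp: qring_basis_def)

lemma qring_pullback_comp:
  assumes "\<tau> ` Q \<subseteq> Q" "\<And>z. z \<in> Q \<Longrightarrow> \<rho> z = \<sigma> (\<tau> z)"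
  shows "compose (qring_elems Q) (qring_pullback Q \<tau>) (qring_pullback Q \<sigma>) = qring_pullback Q \<rho>"
proof
  fix f
  show "compose (qring_elems Q) (qring_pullback Q \<tau>) (qring_pullback Q \<sigma>) f = qring_pullback Q \<rho> f"
  proof (cases "f \<in> qring_elems Q")
    case True
    have "qring_pullback Q \<tau> (qring_pullback Q \<sigma> f) =
        (\<lambda>z. if z \<in> Q then qring_pullback Q \<sigma> f (\<tau> z) else 0)"
      by (rule qring_pullback_apply[OF qring_pullback_in_elems[OF True]])
    then show ?thesis
      using assms True by (auto simp: compose_def qring_pullback_apply fun_eq_iff)
  next
    case False
    then show ?thesis
      by (simp add: compose_def qring_pullback_def)
  qed
qed

lemma qring_pullback_id:
  "(\<And>z. z \<in> Q \<Longrightarrow> \<rho> z = z) \<Longrightarrow> f \<in> qring_elems Q \<Longrightarrow> qring_pullback Q \<rho> f = f"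
  by (auto simp: qring_pullback_apply qring_elems_def)

lemma qring_pullback_eqD:
  assumes "\<sigma> ` Q \<subseteq> Q" "qring_pullback Q \<sigma> = qring_pullback Q \<sigma>'" "z \<in> Q"
  shows "\<sigma> z = \<sigma>' z"
proof -
  have "\<sigma> z \<in> Q" using assms by blast
  then have "qring_pullback Q \<sigma> (qring_basis (\<sigma> z)) z = qring_pullback Q \<sigma>' (qring_basis (\<sigma> z)) z"
    using assms(2) by simp
  then show ?thesis
    using \<open>\<sigma> z \<in> Q\<close> \<open>z \<in> Q\<close> by (simp add: qring_pullback_basis split: if_splits)
qed

lemma qring_pullback_inverse:
  assumes "\<beta> ` Q \<subseteq> Q" "\<And>z. z \<in> Q \<Longrightarrow> \<alpha> (\<beta> z) = z" "f \<in> qring_elems Q"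
  shows "qring_pullback Q \<beta> (qring_pullback Q \<alpha> f) = f"
proof -
  have "qring_pullback Q \<beta> (qring_pullback Q \<alpha> f) =
      compose (qring_elems Q) (qring_pullback Q \<beta>) (qring_pullback Q \<alpha>) f"
    using assms(3) by (simp add: compose_def)
  also have "\<dots> = qring_pullback Q (\<lambda>z. z) f"
    using assms(1,2) by (simp add: qring_pullback_comp)
  also have "\<dots> = f"
    using assms(3) by (simp add: qring_pullback_id)
  finally show ?thesis .
qed

lemma qring_pullback_bij:
  assumes "bij_betw \<sigma> Q Q"
  shows "bij_betw (qring_pullback Q \<sigma>) (qring_elems Q) (qring_elems Q)"
proof -
  define \<tau> where "\<tau> = inv_into Q \<sigma>"
  have "\<sigma> ` Q \<subseteq> Q" "\<tau> ` Q \<subseteq> Q"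
    using assms by (auto simp: \<tau>_def bij_betw_def inv_into_into)
  moreover have "\<sigma> (\<tau> z) = z" "\<tau> (\<sigma> z) = z" if "z \<in> Q" for z
    using assms that by (auto simp: \<tau>_def bij_betw_def f_inv_into_f)
  ultimately show ?thesis
    by (intro bij_betw_byWitness[where f' = "qring_pullback Q \<tau>"])
      (auto simp: qring_pullback_inverse qring_pullback_in_elems)
qed

lemma qring_pullback_add:
  "f \<in> qring_elems Q \<Longrightarrow> g \<in> qring_elems Q \<Longrightarrow>
    qring_pullback Q \<sigma> (qring_add f g) = qring_add (qring_pullback Q \<sigma> f) (qring_pullback Q \<sigma> g)"
  by (simp add: qring_pullback_apply qring_add_in_elems) (auto simp: qring_add_def)

lemma qring_pullback_mult:
  assumes closed: "\<And>x y. x \<in> Q \<Longrightarrow> y \<in> Q \<Longrightarrow> qop x y \<in> Q"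
    and bij: "bij_betw \<sigma> Q Q"
    and hom: "\<And>x y. x \<in> Q \<Longrightarrow> y \<in> Q \<Longrightarrow> \<sigma> (qop x y) = qop (\<sigma> x) (\<sigma> y)"
    and f: "f \<in> qring_elems Q" and g: "g \<in> qring_elems Q"
  shows "qring_pullback Q \<sigma> (qring_mult Q qop f g) =
    qring_mult Q qop (qring_pullback Q \<sigma> f) (qring_pullback Q \<sigma> g)"
proof
  fix z
  show "qring_pullback Q \<sigma> (qring_mult Q qop f g) z =
      qring_mult Q qop (qring_pullback Q \<sigma> f) (qring_pullback Q \<sigma> g) z"
  proof (cases "z \<in> Q")
    case False
    then show ?thesis
      using qring_mult_in_elems[OF closed] f by (simp add: qring_pullback_apply qring_elems_def)
  next
    case True
    define G where "G = (\<lambda>u w. if qop u w = \<sigma> z then f u * g w else 0)"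
    have "qring_mult Q qop (qring_pullback Q \<sigma> f) (qring_pullback Q \<sigma> g) z =
        (\<Sum>x\<in>Q. \<Sum>y\<in>Q. G (\<sigma> x) (\<sigma> y))"
      unfolding qring_mult_def
    proof (intro sum.cong refl)
      fix x y assume "x \<in> Q" "y \<in> Q"
      then have "qop x y = z \<longleftrightarrow> qop (\<sigma> x) (\<sigma> y) = \<sigma> z"
        using bij_betw_imp_inj_on[OF bij] True closed hom by (metis inj_on_eq_iff)
      then show "(if qop x y = z then qring_pullback Q \<sigma> f x * qring_pullback Q \<sigma> g y else 0) =
          G (\<sigma> x) (\<sigma> y)"
        using \<open>x \<in> Q\<close> \<open>y \<in> Q\<close> f g by (simp add: G_def qring_pullback_apply)
    qed
    also have "\<dots> = (\<Sum>x\<in>Q. \<Sum>y\<in>Q. G (\<sigma> x) y)"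
      by (rule sum.cong[OF refl]) (rule sum.reindex_bij_betw[OF bij])
    also have "\<dots> = (\<Sum>x\<in>Q. \<Sum>y\<in>Q. G x y)"
      by (rule sum.reindex_bij_betw[OF bij, where g = "\<lambda>x. \<Sum>y\<in>Q. G x y"])
    also have "\<dots> = qring_pullback Q \<sigma> (qring_mult Q qop f g) z"
      using True qring_mult_in_elems[OF closed] by (simp add: qring_pullback_apply G_def qring_mult_def)
    finally show ?thesis ..
  qed
qed

lemma qring_pullback_aut:
  assumes closed: "\<And>x y. x \<in> Q \<Longrightarrow> y \<in> Q \<Longrightarrow> qop x y \<in> Q"
    and bij: "bij_betw \<sigma> Q Q"
    and hom: "\<And>x y. x \<in> Q \<Longrightarrow> y \<in> Q \<Longrightarrow> \<sigma> (qop x y) = qop (\<sigma> x) (\<sigma> y)"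
  shows "qring_pullback Q \<sigma> \<in> qring_auts Q qop"
proof -
  have "qring_pullback Q \<sigma> \<in> extensional (qring_elems Q)"
    by (simp add: qring_pullback_def)
  moreover have "bij_betw (qring_pullback Q \<sigma>) (qring_elems Q) (qring_elems Q)"
    by (rule qring_pullback_bij[OF bij])
  moreover have "\<forall>f\<in>qring_elems Q. \<forall>g\<in>qring_elems Q.
      qring_pullback Q \<sigma> (qring_add f g) = qring_add (qring_pullback Q \<sigma> f) (qring_pullback Q \<sigma> g)"
    by (intro ballI qring_pullback_add)
  moreover have "\<forall>f\<in>qring_elems Q. \<forall>g\<in>qring_elems Q. qring_pullback Q \<sigma> (qring_mult Q qop f g) =
      qring_mult Q qop (qring_pullback Q \<sigma> f) (qring_pullback Q \<sigma> g)"
    using qring_pullback_mult[where Q = Q and qop = qop and \<sigma> = \<sigma>, OF closed bij hom] by blast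
  ultimately show ?thesis
    unfolding qring_auts_def by blast
qed

section \<open>Idempotents of Z[R_4]\<close>

lemma finite_R4: "finite R4"
  by (simp add: R4_def)

lemma R4_op_in_R4: "R4_op x y \<in> R4"
proof -
  have "R4_op x y \<in> {0..<4}"
    by (simp add: R4_op_def)
  then show ?thesis
    by (auto simp: R4_def)
qed

lemma R4_op_self: "x \<in> R4 \<Longrightarrow> R4_op x x = x"
  by (auto simp: R4_def R4_op_def)

lemma qring_mult_R4:
  "qring_mult R4 R4_op f g z =
    (if z = 0 then f 0 * (g 0 + g 2) + f 2 * (g 1 + g 3)
     else if z = 1 then f 1 * (g 1 + g 3) + f 3 * (g 0 + g 2)
     else if z = 2 then f 2 * (g 0 + g 2) + f 0 * (g 1 + g 3)
     else if z = 3 then f 3 * (g 1 + g 3) + f 1 * (g 0 + g 2) else 0)"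
  unfolding qring_mult_def R4_def R4_op_def
  by (simp add: algebra_simps)

definition R4_idem :: "int \<Rightarrow> int \<Rightarrow> int \<Rightarrow> int" where
  "R4_idem j t = (\<lambda>z. if z = j then t else if z = j + 2 then 1 - t else 0)"

lemma R4_idem_in_elems: "j \<in> {0, 1} \<Longrightarrow> R4_idem j t \<in> qring_elems R4"
  by (auto simp: R4_idem_def R4_def qring_elems_def)

lemma R4_idem_mult:
  assumes "j \<in> {0, 1}" "k \<in> {0, 1}"
  shows "qring_mult R4 R4_op (R4_idem j t) (R4_idem k s) = R4_idem j (if j = k then t else 1 - t)"
  using assms by (auto intro!: ext simp: qring_mult_R4 R4_idem_def algebra_simps)

lemma R4_idem_basis:
  assumes "j \<in> {0, 1}" "t = 0 \<or> t = 1"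
  shows "\<exists>i\<in>R4. R4_idem j t = qring_basis i"
  using assms by (auto simp: R4_def R4_idem_def qring_basis_def fun_eq_iff)

lemma R4_idempotent_coords:
  fixes a b c d :: int
  assumes e0: "a = a * (a + c) + c * (b + d)" and e2: "c = c * (a + c) + a * (b + d)"
    and e1: "b = b * (b + d) + d * (a + c)" and e3: "d = d * (b + d) + b * (a + c)"
  shows "a = 0 \<and> b = 0 \<and> c = 0 \<and> d = 0 \<or> b = 0 \<and> d = 0 \<and> a + c = 1 \<or> a = 0 \<and> c = 0 \<and> b + d = 1"
proof -
  have "(a + c) * (a + c + b + d - 1) = (a * (a + c) + c * (b + d) - a) + (c * (a + c) + a * (b + d) - c)"
    and "(b + d) * (a + c + b + d - 1) = (b * (b + d) + d * (a + c) - b) + (d * (b + d) + b * (a + c) - d)"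
    and "(a - c) * (a + c - (b + d) - 1) = (a * (a + c) + c * (b + d) - a) - (c * (a + c) + a * (b + d) - c)"
    and "(b - d) * (b + d - (a + c) - 1) = (b * (b + d) + d * (a + c) - b) - (d * (b + d) + b * (a + c) - d)"
    by (simp_all add: algebra_simps)
  then have sum_a: "(a + c) * (a + c + b + d - 1) = 0" and sum_b: "(b + d) * (a + c + b + d - 1) = 0"
    and diff_a: "(a - c) * (a + c - (b + d) - 1) = 0" and diff_b: "(b - d) * (b + d - (a + c) - 1) = 0"
    using assms by simp_all
  show ?thesis
  proof (cases "a + c + b + d = 1")
    case False
    then have "a + c = 0" "b + d = 0"
      using sum_a sum_b by simp_all
    then show ?thesis
      using e0 e1 e2 e3 by simp
  next
    case True
    have "a = c \<or> a + c = 1" "b = d \<or> a + c = 0"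
      using diff_a diff_b True unfolding mult_eq_0_iff by arith+
    then show ?thesis
      using True by arith
  qed
qed

lemma R4_idempotent_cases:
  assumes u: "u \<in> qring_elems R4" and idem: "qring_mult R4 R4_op u u = u" and nz: "u \<noteq> (\<lambda>_. 0)"
  shows "\<exists>j\<in>{0, 1}. \<exists>t. u = R4_idem j t"
proof -
  have "u 0 = u 0 * (u 0 + u 2) + u 2 * (u 1 + u 3)" "u 2 = u 2 * (u 0 + u 2) + u 0 * (u 1 + u 3)"
    "u 1 = u 1 * (u 1 + u 3) + u 3 * (u 0 + u 2)" "u 3 = u 3 * (u 1 + u 3) + u 1 * (u 0 + u 2)"
    using fun_cong[OF idem, of 0] fun_cong[OF idem, of 1] fun_cong[OF idem, of 2] fun_cong[OF idem, of 3]
    by (simp_all add: qring_mult_R4)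
  then consider "u 0 = 0" "u 1 = 0" "u 2 = 0" "u 3 = 0"
    | "u 1 = 0" "u 3 = 0" "u 0 + u 2 = 1" | "u 0 = 0" "u 2 = 0" "u 1 + u 3 = 1"
    using R4_idempotent_coords by blast
  then show ?thesis
  proof cases
    case 1
    have "u = (\<lambda>_. 0)"
      by (rule qring_elems_eqI[OF u]) (use 1 in \<open>auto simp: R4_def qring_elems_def\<close>)
    with nz show ?thesis ..
  next
    case 2
    have "u = R4_idem 0 (u 0)"
      by (rule qring_elems_eqI[OF u R4_idem_in_elems]) (use 2 in \<open>auto simp: R4_def R4_idem_def\<close>)
    then show ?thesis by blast
  next
    case 3
    have "u = R4_idem 1 (u 1)"
      by (rule qring_elems_eqI[OF u R4_idem_in_elems]) (use 3 in \<open>auto simp: R4_def R4_idem_def\<close>)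
    then show ?thesis by blast
  qed
qed

lemma int_zero_or_one_if_swap_solvable:
  fixes a b t :: int
  assumes "a * t + b * (1 - t) = 1" "a * (1 - t) + b * t = 0"
  shows "t = 0 \<or> t = 1"
proof -
  have "(a - b) * (2 * t - 1) = (a * t + b * (1 - t)) - (a * (1 - t) + b * t)"
    by (simp add: algebra_simps)
  then have "(a - b) * (2 * t - 1) = 1"
    using assms by simp
  then have "2 * t - 1 = 1 \<or> 2 * t - 1 = -1"
    using zmult_eq_1_iff by blast
  then show ?thesis
    by auto
qed

lemma R4_idem_combination_basis:
  assumes "j \<in> {0, 1}" "k \<in> {0, 1}" "k \<noteq> j"
    and comb: "qring_basis i = (\<lambda>z. a * R4_idem j t z + b * R4_idem k s z +
      c * R4_idem j (1 - t) z + d * R4_idem k (1 - s) z)"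
  shows "i = j \<Longrightarrow> t = 0 \<or> t = 1" and "i = k \<Longrightarrow> s = 0 \<or> s = 1"
proof -
  have at: "qring_basis i z = a * R4_idem j t z + b * R4_idem k s z +
      c * R4_idem j (1 - t) z + d * R4_idem k (1 - s) z" for z
    using comb by simp
  show "t = 0 \<or> t = 1" if "i = j"
  proof (rule int_zero_or_one_if_swap_solvable)
    show "a * t + c * (1 - t) = 1" "a * (1 - t) + c * t = 0"
      using at[of j] at[of "j + 2"] assms(1-3) that by (auto simp: R4_idem_def qring_basis_def)
  qed
  show "s = 0 \<or> s = 1" if "i = k"
  proof (rule int_zero_or_one_if_swap_solvable)
    show "b * s + d * (1 - s) = 1" "b * (1 - s) + d * s = 0"
      using at[of k] at[of "k + 2"] assms(1-3) that by (auto simp: R4_idem_def qring_basis_def)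
  qed
qed

section \<open>Automorphisms of Z[R_4] permute the basis\<close>

lemma qring_aut_R4_basis_images:
  assumes \<phi>: "\<phi> \<in> qring_auts R4 R4_op"
  obtains j k t s where "j \<in> {0, 1}" "k \<in> {0, 1}" "k \<noteq> j"
    "\<phi> (qring_basis 0) = R4_idem j t" "\<phi> (qring_basis 1) = R4_idem k s"
    "\<phi> (qring_basis 2) = R4_idem j (1 - t)" "\<phi> (qring_basis 3) = R4_idem k (1 - s)"
proof -
  have idempotent_image: "\<exists>j\<in>{0, 1}. \<exists>t. \<phi> (qring_basis i) = R4_idem j t" if "i \<in> R4" for i
    using R4_idempotent_cases[OF qring_aut_in_elems[OF \<phi> qring_basis_in_elems[OF that]] _
        qring_aut_basis_nonzero[OF \<phi> that]]
      qring_aut_mult_basis[OF finite_R4 \<phi> that that] R4_op_self[OF that]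
    by simp
  obtain j t where j: "j \<in> {0, 1}" and v0: "\<phi> (qring_basis 0) = R4_idem j t"
    using idempotent_image[of 0] by (auto simp: R4_def)
  obtain k s where k: "k \<in> {0, 1}" and v1: "\<phi> (qring_basis 1) = R4_idem k s"
    using idempotent_image[of 1] by (auto simp: R4_def)
  have v2: "\<phi> (qring_basis 2) = R4_idem j (if j = k then t else 1 - t)"
    and v3: "\<phi> (qring_basis 3) = R4_idem k (if k = j then s else 1 - s)"
    using qring_aut_mult_basis[OF finite_R4 \<phi>, of 0 1] qring_aut_mult_basis[OF finite_R4 \<phi>, of 1 0]
      v0 v1 R4_idem_mult[OF j k] R4_idem_mult[OF k j]
    by (simp_all add: R4_def R4_op_def)
  have "k \<noteq> j"
  proof
    assume "k = j"
    then have "\<phi> (qring_basis 2) = \<phi> (qring_basis 0)"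
      using v0 v2 by simp
    then show False
      using qring_aut_basis_eq_iff[OF \<phi>] by (simp add: R4_def)
  qed
  with j k v0 v1 v2 v3 show thesis
    using that by simp
qed

lemma qring_aut_R4_maps_basis:
  assumes \<phi>: "\<phi> \<in> qring_auts R4 R4_op"
  shows "\<forall>i\<in>R4. \<exists>j\<in>R4. \<phi> (qring_basis i) = qring_basis j"
proof -
  obtain j k t s where j: "j \<in> {0, 1}" and k: "k \<in> {0, 1}" and "k \<noteq> j"
    and v0: "\<phi> (qring_basis 0) = R4_idem j t" and v1: "\<phi> (qring_basis 1) = R4_idem k s"
    and v2: "\<phi> (qring_basis 2) = R4_idem j (1 - t)" and v3: "\<phi> (qring_basis 3) = R4_idem k (1 - s)"
    by (rule qring_aut_R4_basis_images[OF \<phi>])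
  have combination: "qring_basis i = (\<lambda>z. h 0 * R4_idem j t z + h 1 * R4_idem k s z +
      h 2 * R4_idem j (1 - t) z + h 3 * R4_idem k (1 - s) z)"
    if "h \<in> qring_elems R4" "\<phi> h = qring_basis i" for h :: "int \<Rightarrow> int" and i
  proof -
    from that(2) have "qring_basis i = \<phi> h" ..
    also have "\<dots> = (\<lambda>z. \<Sum>q\<in>R4. h q * \<phi> (qring_basis q) z)"
      by (rule qring_additive.map_eq_sum[OF qring_aut_additive[OF \<phi>] finite_R4 that(1)])
    also have "\<dots> = (\<lambda>z. h 0 * R4_idem j t z + h 1 * R4_idem k s z +
        h 2 * R4_idem j (1 - t) z + h 3 * R4_idem k (1 - s) z)"
      by (simp add: R4_def v0 v1 v2 v3 algebra_simps)
    finally show ?thesis .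
  qed
  have "j \<in> R4" "k \<in> R4"
    using j k by (auto simp: R4_def)
  then obtain hj hk where hj: "hj \<in> qring_elems R4" "\<phi> hj = qring_basis j"
    and hk: "hk \<in> qring_elems R4" "\<phi> hk = qring_basis k"
    using qring_aut_surj[OF \<phi> qring_basis_in_elems] by metis
  have t: "t = 0 \<or> t = 1"
    using combination[OF hj] by (rule R4_idem_combination_basis(1)[OF j k \<open>k \<noteq> j\<close>]) simp
  have s: "s = 0 \<or> s = 1"
    using combination[OF hk] by (rule R4_idem_combination_basis(2)[OF j k \<open>k \<noteq> j\<close>]) simp
  have "\<exists>j\<in>R4. \<phi> (qring_basis i) = qring_basis j" if "i \<in> {0, 1, 2, 3}" for i
    using that v0 v1 v2 v3 R4_idem_basis[OF j] R4_idem_basis[OF k] t s by auto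
  then show ?thesis
    by (simp add: R4_def)
qed

section \<open>The affine group of R_4\<close>

lemma carrier_Z2xZ2_rtimes_Z2: "carrier Z2xZ2_rtimes_Z2 = ({0, 1} \<times> {0, 1}) \<times> {0, 1}"
proof -
  have "carrier Z2 = {0, 1}"
    by (auto simp: carrier_integer_mod_group)
  then show ?thesis
    by (simp add: Z2xZ2_rtimes_Z2_def semidirect_prod_def)
qed

lemma Z2xZ2_rtimes_Z2_mult:
  "((a, b), c) \<otimes>\<^bsub>Z2xZ2_rtimes_Z2\<^esub> ((a', b'), c') =
    (if c = 0 then ((a + a') mod 2, (b + b') mod 2) else ((a + b') mod 2, (b + a') mod 2),
     (c + c') mod 2)"
  by (simp add: Z2xZ2_rtimes_Z2_def semidirect_prod_def swap_act_def)

lemma semidirect_prod_mult_closed: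
  assumes "monoid N" "monoid H" "\<And>h n. h \<in> carrier H \<Longrightarrow> n \<in> carrier N \<Longrightarrow> act h n \<in> carrier N"
    and "x \<in> carrier (semidirect_prod N H act)" "y \<in> carrier (semidirect_prod N H act)"
  shows "x \<otimes>\<^bsub>semidirect_prod N H act\<^esub> y \<in> carrier (semidirect_prod N H act)"
  using assms by (auto simp: semidirect_prod_def monoid.m_closed)

lemma Z2xZ2_rtimes_Z2_mult_closed:
  "x \<in> carrier Z2xZ2_rtimes_Z2 \<Longrightarrow> y \<in> carrier Z2xZ2_rtimes_Z2 \<Longrightarrow>
    x \<otimes>\<^bsub>Z2xZ2_rtimes_Z2\<^esub> y \<in> carrier Z2xZ2_rtimes_Z2"
  unfolding Z2xZ2_rtimes_Z2_def
  by (rule semidirect_prod_mult_closed)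
    (auto simp: DirProd_monoid group.is_monoid swap_act_def)

text \<open>The element ((a, b), c) acts on R_4 = Z/4 by z \<mapsto> \<plusminus>z + 2b + c with sign (-1)^(a+b+c):
  the factor Z_2 \<times> Z_2 becomes the Klein four-group {z, -z, 2 - z, z + 2} and the complement Z_2
  is generated by the reflection z \<mapsto> 1 - z. This is an anti-isomorphism onto the affine group
  of Z/4 (R4_aff_mult); pulling back along it reverses the order once more.\<close>

definition R4_sign :: "(int \<times> int) \<times> int \<Rightarrow> int" where
  "R4_sign g = (case g of ((a, b), c) \<Rightarrow> if even (a + b + c) then 1 else -1)"

definition R4_shift :: "(int \<times> int) \<times> int \<Rightarrow> int" where
  "R4_shift g = (case g of ((a, b), c) \<Rightarrow> 2 * b + c)"

definition R4_aff :: "(int \<times> int) \<times> int \<Rightarrow> int \<Rightarrow> int" where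
  "R4_aff g z = (R4_sign g * z + R4_shift g) mod 4"

lemma R4_sign_cases: "R4_sign g = 1 \<or> R4_sign g = -1"
  by (simp add: R4_sign_def split: prod.split)

lemma R4_aff_in_R4: "R4_aff g z \<in> R4"
proof -
  have "R4_aff g z \<in> {0..<4}"
    by (simp add: R4_aff_def)
  then show ?thesis
    by (auto simp: R4_def)
qed

lemma R4_sign_shift_mult:
  assumes "g \<in> carrier Z2xZ2_rtimes_Z2" "h \<in> carrier Z2xZ2_rtimes_Z2"
  shows "R4_sign (g \<otimes>\<^bsub>Z2xZ2_rtimes_Z2\<^esub> h) = R4_sign h * R4_sign g"
    and "R4_shift (g \<otimes>\<^bsub>Z2xZ2_rtimes_Z2\<^esub> h) mod 4 = (R4_sign h * R4_shift g + R4_shift h) mod 4"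
  using assms unfolding carrier_Z2xZ2_rtimes_Z2
  by (auto simp: Z2xZ2_rtimes_Z2_mult R4_sign_def R4_shift_def)

lemma R4_aff_mult:
  assumes "g \<in> carrier Z2xZ2_rtimes_Z2" "h \<in> carrier Z2xZ2_rtimes_Z2"
  shows "R4_aff (g \<otimes>\<^bsub>Z2xZ2_rtimes_Z2\<^esub> h) z = R4_aff h (R4_aff g z)"
proof -
  have "R4_aff h (R4_aff g z) = (R4_sign h * (R4_sign g * z + R4_shift g) + R4_shift h) mod 4"
    unfolding R4_aff_def by (intro mod_add_cong mod_mult_cong) simp_all
  also have "\<dots> = (R4_sign h * R4_sign g * z + (R4_sign h * R4_shift g + R4_shift h)) mod 4"
    by (simp add: algebra_simps)
  also have "\<dots> = R4_aff (g \<otimes>\<^bsub>Z2xZ2_rtimes_Z2\<^esub> h) z"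
    unfolding R4_aff_def by (rule mod_add_cong) (simp_all add: R4_sign_shift_mult[OF assms])
  finally show ?thesis ..
qed

lemma R4_aff_op: "R4_aff g (R4_op x y) = R4_op (R4_aff g x) (R4_aff g y)"
proof -
  have "R4_aff g (R4_op x y) = (R4_sign g * (2 * y - x) + R4_shift g) mod 4"
    unfolding R4_aff_def R4_op_def by (intro mod_add_cong mod_mult_cong) simp_all
  also have "\<dots> = (2 * (R4_sign g * y + R4_shift g) - (R4_sign g * x + R4_shift g)) mod 4"
    by (simp add: algebra_simps)
  also have "\<dots> = R4_op (R4_aff g x) (R4_aff g y)"
    unfolding R4_aff_def R4_op_def by (intro mod_diff_cong mod_mult_cong) simp_all
  finally show ?thesis .
qed

lemma R4_aff_bij: "bij_betw (R4_aff g) R4 R4"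
proof -
  have "inj_on (R4_aff g) R4"
  proof (rule inj_onI)
    fix x y assume "x \<in> R4" "y \<in> R4" "R4_aff g x = R4_aff g y"
    then have "(R4_sign g * (R4_sign g * x + R4_shift g) - R4_sign g * R4_shift g) mod 4 =
        (R4_sign g * (R4_sign g * y + R4_shift g) - R4_sign g * R4_shift g) mod 4"
      unfolding R4_aff_def by (intro mod_diff_cong mod_mult_cong) simp_all
    then have "x mod 4 = y mod 4"
      using R4_sign_cases[of g] by (auto simp: algebra_simps)
    then show "x = y"
      using \<open>x \<in> R4\<close> \<open>y \<in> R4\<close> by (auto simp: R4_def)
  qed
  moreover have "R4_aff g ` R4 \<subseteq> R4"
    using R4_aff_in_R4 by blast
  ultimately show ?thesis
    by (simp add: bij_betw_def endo_inj_surj finite_R4)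
qed

lemma R4_aff_eq_imp_eq:
  assumes "g \<in> carrier Z2xZ2_rtimes_Z2" "h \<in> carrier Z2xZ2_rtimes_Z2"
    and "R4_aff g 0 = R4_aff h 0" "R4_aff g 1 = R4_aff h 1"
  shows "g = h"
  using assms unfolding carrier_Z2xZ2_rtimes_Z2
  by (auto simp: R4_aff_def R4_sign_def R4_shift_def)

lemma R4_aff_transitive:
  assumes "p \<in> R4" "q \<in> R4" "R4_op p q \<noteq> p"
  shows "\<exists>g\<in>carrier Z2xZ2_rtimes_Z2. R4_aff g p = 0 \<and> R4_aff g q = 1"
proof -
  have "(p, q) \<in> {(0, 1), (0, 3), (1, 0), (1, 2), (2, 1), (2, 3), (3, 0), (3, 2)}"
    using assms by (auto simp: R4_def R4_op_def)
  then show ?thesis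
    unfolding carrier_Z2xZ2_rtimes_Z2
    by (elim insertE; simp add: R4_aff_def R4_sign_def R4_shift_def)
qed

lemma R4_quandle_aut_affine:
  assumes "inj_on \<pi> R4" "\<pi> ` R4 \<subseteq> R4"
    and hom: "\<And>x y. x \<in> R4 \<Longrightarrow> y \<in> R4 \<Longrightarrow> \<pi> (R4_op x y) = R4_op (\<pi> x) (\<pi> y)"
  shows "\<exists>g\<in>carrier Z2xZ2_rtimes_Z2. \<forall>z\<in>R4. R4_aff g (\<pi> z) = z"
proof -
  have \<pi>2: "\<pi> 2 = R4_op (\<pi> 0) (\<pi> 1)" and \<pi>3: "\<pi> 3 = R4_op (\<pi> 1) (\<pi> 0)"
    using hom[of 0 1] hom[of 1 0] by (simp_all add: R4_def R4_op_def)
  have "\<pi> 0 \<in> R4" "\<pi> 1 \<in> R4"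
    using assms(2) by (auto simp: R4_def)
  moreover have "R4_op (\<pi> 0) (\<pi> 1) \<noteq> \<pi> 0"
    using inj_onD[OF assms(1), of 2 0] \<pi>2 by (auto simp: R4_def)
  ultimately obtain g where g: "g \<in> carrier Z2xZ2_rtimes_Z2" "R4_aff g (\<pi> 0) = 0" "R4_aff g (\<pi> 1) = 1"
    using R4_aff_transitive by blast
  then have "R4_aff g (\<pi> 2) = 2" "R4_aff g (\<pi> 3) = 3"
    unfolding \<pi>2 \<pi>3 R4_aff_op by (simp_all add: R4_op_def)
  with g show ?thesis
    by (auto simp: R4_def)
qed

definition R4_aut :: "(int \<times> int) \<times> int \<Rightarrow> (int \<Rightarrow> int) \<Rightarrow> (int \<Rightarrow> int)" where
  "R4_aut g = qring_pullback R4 (R4_aff g)"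

lemma R4_aut_in_auts: "R4_aut g \<in> qring_auts R4 R4_op"
  unfolding R4_aut_def
  by (rule qring_pullback_aut) (simp_all add: R4_op_in_R4 R4_aff_bij R4_aff_op)

lemma R4_aut_hom: "R4_aut \<in> hom Z2xZ2_rtimes_Z2 (qring_Aut R4 R4_op)"
proof (rule homI)
  fix g h assume "g \<in> carrier Z2xZ2_rtimes_Z2" "h \<in> carrier Z2xZ2_rtimes_Z2"
  then have "compose (qring_elems R4) (R4_aut g) (R4_aut h) = R4_aut (g \<otimes>\<^bsub>Z2xZ2_rtimes_Z2\<^esub> h)"
    unfolding R4_aut_def by (intro qring_pullback_comp) (auto simp: R4_aff_in_R4 R4_aff_mult)
  then show "R4_aut (g \<otimes>\<^bsub>Z2xZ2_rtimes_Z2\<^esub> h) = R4_aut g \<otimes>\<^bsub>qring_Aut R4 R4_op\<^esub> R4_aut h"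
    by (simp add: qring_Aut_def)
qed (simp add: qring_Aut_def R4_aut_in_auts)

lemma inj_on_R4_aut: "inj_on R4_aut (carrier Z2xZ2_rtimes_Z2)"
proof (rule inj_onI)
  fix g h
  assume g: "g \<in> carrier Z2xZ2_rtimes_Z2" and h: "h \<in> carrier Z2xZ2_rtimes_Z2"
    and eq: "R4_aut g = R4_aut h"
  have "R4_aff g ` R4 \<subseteq> R4"
    using R4_aff_in_R4 by blast
  then have "R4_aff g z = R4_aff h z" if "z \<in> R4" for z
    by (rule qring_pullback_eqD[OF _ eq[unfolded R4_aut_def] that])
  then show "g = h"
    by (intro R4_aff_eq_imp_eq[OF g h]) (simp_all add: R4_def)
qed

lemma R4_aut_surj:
  assumes \<phi>: "\<phi> \<in> qring_auts R4 R4_op"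
  shows "\<exists>g\<in>carrier Z2xZ2_rtimes_Z2. \<phi> = R4_aut g"
proof -
  have "\<forall>i\<in>R4. \<exists>j. j \<in> R4 \<and> \<phi> (qring_basis i) = qring_basis j"
    using qring_aut_R4_maps_basis[OF \<phi>] by blast
  from bchoice[OF this]
  obtain \<pi> where \<pi>: "\<forall>i\<in>R4. \<pi> i \<in> R4 \<and> \<phi> (qring_basis i) = qring_basis (\<pi> i)" ..
  note perm = qring_aut_basis_perm[where qop = R4_op, OF finite_R4 R4_op_in_R4 \<phi> \<pi>[rule_format]]
  have "\<pi> ` R4 \<subseteq> R4"
    using \<pi> by blast
  then obtain g where g: "g \<in> carrier Z2xZ2_rtimes_Z2"
    and aff_inverse: "\<And>z. z \<in> R4 \<Longrightarrow> R4_aff g (\<pi> z) = z"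
    using R4_quandle_aut_affine[OF perm(1) _ perm(2)] by blast
  have "\<phi> = R4_aut g"
  proof (rule qring_auts_eqI[OF finite_R4 \<phi> R4_aut_in_auts])
    fix i assume i: "i \<in> R4"
    have \<pi>i: "\<pi> i \<in> R4" "\<phi> (qring_basis i) = qring_basis (\<pi> i)"
      using \<pi> i by auto
    have "z \<in> R4 \<and> R4_aff g z = i \<longleftrightarrow> z = \<pi> i" for z
      using inj_onD[OF bij_betw_imp_inj_on[OF R4_aff_bij], of g z "\<pi> i"] \<pi>i(1) aff_inverse[OF i] by auto
    then have "R4_aut g (qring_basis i) = qring_basis (\<pi> i)"
      unfolding R4_aut_def qring_pullback_basis[OF i] by (simp add: qring_basis_def)
    with \<pi>i(2) show "\<phi> (qring_basis i) = R4_aut g (qring_basis i)"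
      by simp
  qed
  with g show ?thesis ..
qed

lemma bij_betw_R4_aut: "bij_betw R4_aut (carrier Z2xZ2_rtimes_Z2) (carrier (qring_Aut R4 R4_op))"
proof -
  have "R4_aut ` carrier Z2xZ2_rtimes_Z2 = qring_auts R4 R4_op"
    using R4_aut_in_auts R4_aut_surj by blast
  then show ?thesis
    using inj_on_R4_aut by (simp add: bij_betw_def qring_Aut_def)
qed

text \<open>A variant of iso_set_sym that needs only closure of carrier G under multiplication
  instead of a group structure on G.\<close>

lemma inv_into_iso:
  assumes h: "h \<in> hom G H" and bij: "bij_betw h (carrier G) (carrier H)"
    and closed: "\<And>x y. x \<in> carrier G \<Longrightarrow> y \<in> carrier G \<Longrightarrow> x \<otimes>\<^bsub>G\<^esub> y \<in> carrier G"
  shows "inv_into (carrier G) h \<in> iso H G"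
proof -
  let ?h' = "inv_into (carrier G) h"
  have bij': "bij_betw ?h' (carrier H) (carrier G)"
    using bij by (rule bij_betw_inv_into)
  have "?h' \<in> hom H G"
  proof (rule homI)
    show "?h' x \<in> carrier G" if "x \<in> carrier H" for x
      using bij' that by (rule bij_betw_apply)
    fix x y assume x: "x \<in> carrier H" and y: "y \<in> carrier H"
    show "?h' (x \<otimes>\<^bsub>H\<^esub> y) = ?h' x \<otimes>\<^bsub>G\<^esub> ?h' y"
    proof (rule inv_into_f_eq)
      show "inj_on h (carrier G)"
        using bij by (rule bij_betw_imp_inj_on)
      show "?h' x \<otimes>\<^bsub>G\<^esub> ?h' y \<in> carrier G"
        using closed bij_betw_apply[OF bij'] x y by blast
      show "h (?h' x \<otimes>\<^bsub>G\<^esub> ?h' y) = x \<otimes>\<^bsub>H\<^esub> y"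
        using hom_mult[OF h] bij_betw_apply[OF bij'] bij_betw_inv_into_right[OF bij] x y by simp
    qed
  qed
  with bij' show ?thesis
    by (simp add: iso_def)
qed

theorem theorem6p4:
  shows "qring_Aut R4 R4_op \<cong> Z2xZ2_rtimes_Z2"
  using inv_into_iso[OF R4_aut_hom bij_betw_R4_aut Z2xZ2_rtimes_Z2_mult_closed] by (rule is_isoI)

end
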